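(* Let $K_h, M_h, W_h, D_h\in\mathbb{R}^{N_h\times N_h}$, $y_d,f\in\mathbb{R}^{N_h}$, $\alpha>0$, $\delta>0$, $a,b\in\mathbb{R}$, $c_n$ and $\sigma$ be as described in the context, and let $$F(p,\lambda,\mu)=\tfrac12\|K_h^Tp+\lambda-M_hy_d\|_{M_h^{-1}}^2+\tfrac{1}{2\alpha}\|M_hp-\mu\|_{M_h^{-1}}^2+\delta^*_{\mathcal{C}}(\lambda)+\delta^*_{\mathcal{S}}(\mu)+(M_hf,p)-\tfrac12\|y_d\|_{M_h}^2$$ for $p,\lambda,\mu\in\mathbb{R}^{N_h}$, with $\phi(p,\lambda,\mu)=\tfrac12\|K_h^Tp+\lambda-M_hy_d\|_{M_h^{-1}}^2+\tfrac{1}{2\alpha}\|M_hp-\mu\|_{M_h^{-1}}^2-\tfrac12\|y_d\|_{M_h}^2$. Consider the following algorithm (FE-dABCD). Input: $(p^1,\lambda^1,\mu^1)=(\tilde p^0,\tilde\lambda^0,\tilde\mu^0)\in\mathbb{R}^{N_h}\times\mathrm{dom}(\delta^*_{\mathcal{C}})\times\mathrm{dom}(\delta^*_{\mathcal{S}})$, a sequence of nonnegative numbers $\{\epsilon_k\}$ with $\sum_{k=1}^\infty k\epsilon_k<\infty$, $t_1=1$. For $k=1,2,\dots$: Step 1: choose error vectors $\delta_p^k,\delta_\lambda^k,\delta_\mu^k\in\mathbb{R}^{N_h}$ with $\max\{\|\delta_p^k\|,\|\delta_\lambda^k\|,\|\delta_\mu^k\|\}\le\epsilon_k$, and compute \begin{align*}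 \tilde p^k&=\arg\min_p\big\{(M_hf,p)+\phi(p,\lambda^k,\mu^k)-\langle\delta_p^k,p\rangle\big\},\\ \tilde\lambda^k&=\arg\min_\lambda\big\{\delta^*_{\mathcal{C}}(\lambda)+\tfrac12\|\lambda-M_hy_d+K_h^T\tilde p^k\|_{M_h^{-1}}^2+\tfrac12\|\lambda-\lambda^k\|_{\sigma I-M_h^{-1}}^2-\langle\delta_\lambda^k,\lambda\rangle\big\},\\ \tilde\mu^k&=\arg\min_\mu\big\{\delta^*_{\mathcal{S}}(\mu)+\tfrac{1}{2\alpha}\|\mu-M_h\tilde p^k\|_{M_h^{-1}}^2+\tfrac{1}{2\alpha}\|\mu-\mu^k\|_{c_nW_h^{-1}-M_h^{-1}}^2-\langle\delta_\mu^k,\mu\rangle\big\}; \end{align*} Step 2: set $t_{k+1}=\frac{1+\sqrt{1+4t_k^2}}{2}$, $\beta_k=\frac{t_k-1}{t_{k+1}}$, and $p^{k+1}=\tilde p^k+\beta_k(\tilde p^k-\tilde p^{k-1})$, $\lambda^{k+1}=\tilde\lambda^k+\beta_k(\tilde\lambda^k-\tilde\lambda^{k-1})$, $\mu^{k+1}=\tilde\mu^k+\beta_k(\tilde\mu^k-\tilde\mu^{k-1})$. Let $\tilde z^k=(\tilde p^k,\tilde\lambda^k,\tilde\mu^k)$ be the generated sequence and let $z^*$ be a minimizer of $F$. Then there is a constant $c_0$ such that $$F(\tilde z^k)-F(z^* )\le\frac{2\|\tilde z^0-z^*\|_{\mathscr{S}}^2+c_0}{(k+1)^2}\qquad\forall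 k\ge1,$$ where $\mathscr{S}=\mathrm{Diag}(\mathcal{D}_1,\mathcal{D}_2+\mathcal{Q}_{22})$ with $\mathcal{D}_1=0$, $\mathcal{D}_2=\mathrm{Diag}\big(\sigma I-M_h^{-1},\ \tfrac1\alpha(c_nW_h^{-1}-M_h^{-1})\big)$, $\mathcal{Q}_{22}=\mathrm{Diag}\big(M_h^{-1},\tfrac1\alpha M_h^{-1}\big)$.
   Context: Setting: $\Omega\subset\mathbb{R}^n$ ($n=2,3$) is an open bounded convex polygonal/polyhedral domain (or approximated by $\Omega_h$), with a regular, quasi-uniform family of triangulations; $\phi_1,\dots,\phi_{N_h}$ are the nodal basis functions of continuous piecewise linear finite elements vanishing on the boundary. $K_h=(a(\phi_i,\phi_j))_{i,j}$ is the stiffness matrix of the bilinear form $a(y,v)=\int_\Omega(\sum_{i,j}a_{ij}y_{x_i}v_{x_j}+c_0yv)dx$ of a uniformly elliptic operator (symmetric positive definite), $M_h=(\int_{\Omega_h}\phi_i\phi_j dx)_{i,j}$ is the mass matrix, $W_h=\mathrm{diag}(\int_{\Omega_h}\phi_i dx)_{i}$ is the lumped mass matrix, and $D_h=\sum_{j=1}^n\big(\int_{\Omega_h}\partial_{x_j}\phi_i\,\partial_{x_j}\phi_l\,dx\big)_{i,l}$. $y_d,f\in\mathbb{R}^{N_h}$ are nodal values of given data. $\mathcal{C}=\{z\in\mathbb{R}^{N_h}: z^TD_hz\le\delta\}$, $\mathcal{S}=\{z\in\mathbb{R}^{N_h}: a\le z\le b \text{ componentwise}\}$. For a closed convex set $B$,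 $\delta^*_B(y)=\sup_{x\in B}(y,x)$ is its support function (the conjugate of the indicator function of $B$). $\|x\|_G^2=x^TGx$ and $(\cdot,\cdot)$, $\langle\cdot,\cdot\rangle$ denote the Euclidean inner product. $c_n=4$ if $n=2$ and $c_n=5$ if $n=3$ (so that $\|z\|_{M_h}^2\le\|z\|_{W_h}^2\le c_n\|z\|_{M_h}^2$), and $\sigma=c_n\omega_m$ where $\omega_m$ is the inverse of the smallest diagonal entry of $W_h$, so that $\sigma I-M_h^{-1}\succeq0$ and $c_nW_h^{-1}-M_h^{-1}\succeq0$. *)

theory Defs
  imports "HOL-Analysis.Analysis"
begin

definition gnorm2 :: "real^'n^'n \<Rightarrow> real^'n \<Rightarrow> real" where
  "gnorm2 G x = x \<bullet> (G *v x)"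

definition spd :: "real^'n^'n \<Rightarrow> bool" where
  "spd G \<longleftrightarrow> transpose G = G \<and> (\<forall>x. x \<noteq> 0 \<longrightarrow> 0 < x \<bullet> (G *v x))"

definition psd :: "real^'n^'n \<Rightarrow> bool" where
  "psd G \<longleftrightarrow> transpose G = G \<and> (\<forall>x. 0 \<le> x \<bullet> (G *v x))"

definition is_diag :: "real^'n^'n \<Rightarrow> bool" where
  "is_diag G \<longleftrightarrow> (\<forall>i j. i \<noteq> j \<longrightarrow> G $ i $ j = 0)"

text \<open>Support function of a set B (the conjugate of its indicator function);
  it is only used for the compact nonempty sets C and S below, where it is finite.\<close>
definition support_fun :: "(real^'n) set \<Rightarrow> real^'n \<Rightarrow> real" where
  "support_fun B y = (SUP x\<in>B. y \<bullet> x)"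

definition C_set :: "real^'n^'n \<Rightarrow> real \<Rightarrow> (real^'n) set" where
  "C_set D delta = {z. z \<bullet> (D *v z) \<le> delta}"

definition S_box :: "real \<Rightarrow> real \<Rightarrow> (real^'n) set" where
  "S_box a b = {z. \<forall>i. a \<le> z $ i \<and> z $ i \<le> b}"

definition phi_fun :: "real^'n^'n \<Rightarrow> real^'n^'n \<Rightarrow> real^'n \<Rightarrow> real
    \<Rightarrow> real^'n \<Rightarrow> real^'n \<Rightarrow> real^'n \<Rightarrow> real" where
  "phi_fun K M yd \<alpha> p l m =
     1/2 * gnorm2 (matrix_inv M) (transpose K *v p + l - M *v yd)
   + 1/(2*\<alpha>) * gnorm2 (matrix_inv M) (M *v p - m)
   - 1/2 * gnorm2 M yd"

definition F_fun :: "real^'n^'n \<Rightarrow> real^'n^'n \<Rightarrow> real^'n^'n \<Rightarrow> real^'n \<Rightarrow> real^'n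
    \<Rightarrow> real \<Rightarrow> real \<Rightarrow> real \<Rightarrow> real \<Rightarrow> real^'n \<Rightarrow> real^'n \<Rightarrow> real^'n \<Rightarrow> real" where
  "F_fun K M D yd f \<alpha> delta a b p l m =
     1/2 * gnorm2 (matrix_inv M) (transpose K *v p + l - M *v yd)
   + 1/(2*\<alpha>) * gnorm2 (matrix_inv M) (M *v p - m)
   + support_fun (C_set D delta) l + support_fun (S_box a b) m
   + (M *v f) \<bullet> p - 1/2 * gnorm2 M yd"

end

theory Submission
  imports Defs
begin

(* The lambda- and mu-steps are proximal steps on the convex support functions of C and S, so
   the three-point inequality of proximal minimization holds for them up to the error terms.
   The p-step minimizes a strongly convex quadratic; its error is moved to the exact partial
   minimizer in p, which differs from the computed iterate by an explicit linear offset.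
   Comparing the new iterate with the previous iterate (weight t_k - 1) and with the minimizer
   (weight 1), the FISTA relation t_k (t_k - 1) = t_(k-1)^2 makes the energy
     E_k = t_k^2 (F(z_k) - F(z_star)) + 1/2 |u_k|^2
   with u_k = t_k z_k - (t_k - 1) z_(k-1) - z_star (on the lambda, mu blocks) almost
   nonincreasing: E_k <= E_(k-1) + C k eps_k (sqrt E_(k-1) + sqrt E_k) + C (k eps_k)^2.
   Summability of k eps_k bounds E_k, and t_k >= (k+1)/2 gives the O(1/k^2) rate. *)

section \<open>Quadratic forms and matrices\<close>

lemma symmetric_matrix_inner:
  fixes A :: "real^'n^'n"
  assumes "transpose A = A"
  shows "(A *v x) \<bullet> y = x \<bullet> (A *v y)"
  by (metis assms dot_lmul_matrix transpose_matrix_vector)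

lemma gnorm2_add:
  fixes G :: "real^'n^'n"
  assumes "transpose G = G"
  shows "gnorm2 G (x + y) = gnorm2 G x + 2 * (y \<bullet> (G *v x)) + gnorm2 G y"
proof -
  have "x \<bullet> (G *v y) = y \<bullet> (G *v x)"
    by (metis assms symmetric_matrix_inner inner_commute)
  then show ?thesis
    unfolding gnorm2_def by (simp add: matrix_vector_right_distrib inner_add_left inner_add_right)
qed

lemma gnorm2_scaleR: "gnorm2 G (c *\<^sub>R x) = c\<^sup>2 * gnorm2 G x"
  unfolding gnorm2_def by (simp add: matrix_vector_mult_scaleR power2_eq_square)

lemma gnorm2_uminus: "gnorm2 G (- x) = gnorm2 G x"
  using gnorm2_scaleR[of G "-1" x] by simp

lemma gnorm2_diff:
  fixes G :: "real^'n^'n"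
  assumes "transpose G = G"
  shows "gnorm2 G (x - y) = gnorm2 G x - 2 * (y \<bullet> (G *v x)) + gnorm2 G y"
  using gnorm2_add[OF assms, of x "- y"] gnorm2_uminus[of G y] by simp

lemma gnorm2_matrix_add: "gnorm2 (A + B) x = gnorm2 A x + gnorm2 B x"
  unfolding gnorm2_def by (simp add: matrix_vector_mult_add_rdistrib inner_add_right)

lemma matrix_inv_inverse:
  fixes A :: "'a::semiring_1^'n^'n"
  assumes "invertible A"
  shows "A ** matrix_inv A = mat 1" and "matrix_inv A ** A = mat 1"
proof -
  have "\<exists>A'. A ** A' = mat 1 \<and> A' ** A = mat 1"
    using assms unfolding invertible_def by blast
  then have "A ** matrix_inv A = mat 1 \<and> matrix_inv A ** A = mat 1"
    unfolding matrix_inv_def by (rule someI_ex)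
  then show "A ** matrix_inv A = mat 1" and "matrix_inv A ** A = mat 1"
    by auto
qed

lemma invertible_if_positive_definite:
  fixes A :: "real^'n^'n"
  assumes "\<And>x. x \<noteq> 0 \<Longrightarrow> 0 < x \<bullet> (A *v x)"
  shows "invertible A"
proof -
  have "\<forall>x. A *v x = 0 \<longrightarrow> x = 0"
    using assms by force
  then show ?thesis
    using matrix_left_invertible_ker invertible_left_inverse by blast
qed

lemma symmetric_matrix_inv:
  fixes A :: "'a::comm_semiring_1^'n^'n"
  assumes "invertible A" and "transpose A = A"
  shows "transpose (matrix_inv A) = matrix_inv A"
proof -
  have left: "transpose (matrix_inv A) ** A = mat 1"
    by (metis assms matrix_inv_inverse(1) matrix_transpose_mul transpose_mat)
  have "transpose (matrix_inv A) = transpose (matrix_inv A) ** (A ** matrix_inv A)"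
    using matrix_inv_inverse(1)[OF assms(1)] by (simp add: matrix_mul_rid)
  also have "\<dots> = matrix_inv A"
    by (metis left matrix_mul_assoc matrix_mul_lid)
  finally show ?thesis .
qed

lemma spd_coercive:
  fixes G :: "real^'n^'n"
  assumes "spd G"
  shows "\<exists>c>0. \<forall>x. c * (norm x)\<^sup>2 \<le> gnorm2 G x"
proof -
  let ?q = "\<lambda>x. x \<bullet> (G *v x)"
  have "continuous_on (sphere 0 1) ?q"
    by (intro continuous_intros linear_continuous_on) auto
  moreover have "sphere (0::real^'n) 1 \<noteq> {}"
    by simp
  ultimately obtain x0 where x0: "x0 \<in> sphere 0 1" "\<forall>y\<in>sphere 0 1. ?q x0 \<le> ?q y"
    using continuous_attains_inf[OF compact_sphere] by blast
  have "x0 \<noteq> 0"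
    using x0(1) by auto
  then have pos: "0 < ?q x0"
    using assms unfolding spd_def by blast
  have "?q x0 * (norm x)\<^sup>2 \<le> gnorm2 G x" for x
  proof (cases "x = 0")
    case True
    then show ?thesis by (simp add: gnorm2_def)
  next
    case False
    then have "(1 / norm x) *\<^sub>R x \<in> sphere 0 1"
      by simp
    then have "?q x0 \<le> ?q ((1 / norm x) *\<^sub>R x)"
      using x0(2) by blast
    also have "\<dots> = gnorm2 G x / (norm x)\<^sup>2"
      using gnorm2_scaleR[of G "1 / norm x" x] unfolding gnorm2_def by (simp add: divide_simps)
    finally show ?thesis
      using False by (simp add: divide_simps)
  qed
  then show ?thesis
    using pos by blast
qed

lemma matrix_vector_mult_bounded:
  fixes A :: "real^'n^'m"
  shows "\<exists>C>0. \<forall>x. norm (A *v x) \<le> C * norm x"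
  using bounded_linear.pos_bounded[OF matrix_vector_mul_bounded_linear[of A]]
  by (auto simp: mult.commute)

section \<open>Support functions of the constraint sets\<close>

lemma support_fun_convex:
  fixes B :: "(real^'n) set"
  assumes ne: "B \<noteq> {}" and bd: "bounded B"
  shows "convex_on UNIV (support_fun B)"
proof
  obtain R where R: "\<forall>x\<in>B. norm x \<le> R"
    using bd unfolding bounded_iff by blast
  have bdd: "bdd_above ((\<lambda>x. y \<bullet> x) ` B)" for y
  proof (rule bdd_aboveI2)
    fix x assume "x \<in> B"
    have "y \<bullet> x \<le> norm y * norm x" by (rule norm_cauchy_schwarz)
    also have "\<dots> \<le> norm y * R" using R \<open>x \<in> B\<close> by (simp add: mult_left_mono)
    finally show "y \<bullet> x \<le> norm y * R" .
  qed
  fix t :: real and y1 y2 :: "real^'n"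
  assume t: "0 < t" "t < 1"
  show "support_fun B ((1 - t) *\<^sub>R y1 + t *\<^sub>R y2) \<le> (1 - t) * support_fun B y1 + t * support_fun B y2"
    unfolding support_fun_def
  proof (rule cSUP_least[OF ne])
    fix x assume x: "x \<in> B"
    have "((1 - t) *\<^sub>R y1 + t *\<^sub>R y2) \<bullet> x = (1 - t) * (y1 \<bullet> x) + t * (y2 \<bullet> x)"
      by (simp add: inner_add_left)
    also have "\<dots> \<le> (1 - t) * (SUP x\<in>B. y1 \<bullet> x) + t * (SUP x\<in>B. y2 \<bullet> x)"
      using t by (intro add_mono mult_left_mono cSUP_upper[OF x bdd]) auto
    finally show "((1 - t) *\<^sub>R y1 + t *\<^sub>R y2) \<bullet> x \<le> (1 - t) * (SUP x\<in>B. y1 \<bullet> x) + t * (SUP x\<in>B. y2 \<bullet> x)" .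
  qed
qed simp

lemma C_set_nonempty: "0 < delta \<Longrightarrow> C_set D delta \<noteq> {}"
  unfolding C_set_def by (auto intro: exI[of _ 0])

lemma C_set_bounded:
  assumes "spd D"
  shows "bounded (C_set D delta)"
proof -
  obtain c where c: "c > 0" "\<forall>x. c * (norm x)\<^sup>2 \<le> gnorm2 D x"
    using spd_coercive[OF assms] by blast
  have "norm z \<le> sqrt (delta / c)" if "z \<in> C_set D delta" for z
  proof (rule real_le_rsqrt)
    have "c * (norm z)\<^sup>2 \<le> delta"
      using c(2) that unfolding C_set_def gnorm2_def by (meson mem_Collect_eq order_trans)
    then show "(norm z)\<^sup>2 \<le> delta / c"
      using c(1) by (simp add: field_simps)
  qed
  then show ?thesis
    unfolding bounded_iff by blast
qed

lemma S_box_nonempty: "a \<le> b \<Longrightarrow> S_box a b \<noteq> {}"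
  unfolding S_box_def by (auto intro: exI[of _ "\<chi> i. a"])

lemma S_box_bounded: "bounded (S_box a b :: (real^'n) set)"
proof -
  have "norm z \<le> (\<Sum>i\<in>(UNIV::'n set). \<bar>a\<bar> + \<bar>b\<bar>)" if z: "z \<in> S_box a b" for z :: "real^'n"
  proof -
    have "norm z \<le> (\<Sum>i\<in>UNIV. \<bar>z $ i\<bar>)"
      by (rule norm_le_l1_cart)
    also have "\<dots> \<le> (\<Sum>i\<in>(UNIV::'n set). \<bar>a\<bar> + \<bar>b\<bar>)"
      using z unfolding S_box_def by (intro sum_mono) (smt (verit) mem_Collect_eq)
    finally show ?thesis .
  qed
  then show ?thesis
    unfolding bounded_iff by blast
qed

section \<open>Perturbed minimizers and the three-point inequality\<close>

definition perturbed_argmin :: "('a::real_inner \<Rightarrow> real) \<Rightarrow> 'a \<Rightarrow> 'a \<Rightarrow> bool" where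
  "perturbed_argmin \<phi> d x \<longleftrightarrow> (\<forall>q. \<phi> x - d \<bullet> x \<le> \<phi> q - d \<bullet> q)"

lemma nonneg_if_nonneg_perturbations:
  fixes A B :: real
  assumes "\<And>t. 0 < t \<Longrightarrow> t \<le> 1 \<Longrightarrow> 0 \<le> A + t * B"
  shows "0 \<le> A"
proof -
  have "((\<lambda>t. A + t * B) \<longlongrightarrow> A) (at_right 0)"
    by (auto intro!: tendsto_eq_intros)
  moreover have "eventually (\<lambda>t. t \<in> {0<..<1}) (at_right (0::real))"
    by (rule eventually_at_right_real) simp
  then have "eventually (\<lambda>t. 0 \<le> A + t * B) (at_right 0)"
    by eventually_elim (auto intro: assms)
  ultimately show ?thesis
    by (rule tendsto_lowerbound) simp
qed

lemma linear_coeff_zero_if_nonneg_quadratic: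
  fixes A B :: real
  assumes "\<And>t. 0 \<le> t * A + t\<^sup>2 * B"
  shows "A = 0"
proof -
  have "0 \<le> A + t * B" "0 \<le> - A + t * B" if t: "0 < t" for t
  proof -
    have "0 \<le> t * (A + t * B)" "0 \<le> t * (- A + t * B)"
      using assms[of t] assms[of "- t"] by (simp_all add: power2_eq_square algebra_simps)
    then show "0 \<le> A + t * B" "0 \<le> - A + t * B"
      using t by (simp_all add: zero_le_mult_iff)
  qed
  then show ?thesis
    using nonneg_if_nonneg_perturbations[of A B] nonneg_if_nonneg_perturbations[of "- A" B] by auto
qed

lemma prox_three_point:
  fixes \<theta> :: "real^'n \<Rightarrow> real" and G1 G2 :: "real^'n^'n"
  assumes conv: "convex_on UNIV \<theta>"
    and G1: "transpose G1 = G1" and G2: "transpose G2 = G2"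
    and min: "perturbed_argmin (\<lambda>q. \<theta> q + c * gnorm2 G1 (q - a) + c * gnorm2 G2 (q - b)) d x"
  shows "\<theta> x + c * gnorm2 G1 (x - a) + c * gnorm2 G2 (x - b) - d \<bullet> x + c * gnorm2 (G1 + G2) (q - x)
         \<le> \<theta> q + c * gnorm2 G1 (q - a) + c * gnorm2 G2 (q - b) - d \<bullet> q"
proof -
  define y where "y = q - x"
  define \<Psi> where "\<Psi> z = c * gnorm2 G1 (z - a) + c * gnorm2 G2 (z - b) - d \<bullet> z" for z
  define L where "L = 2 * c * (y \<bullet> (G1 *v (x - a))) + 2 * c * (y \<bullet> (G2 *v (x - b))) - d \<bullet> y"
  define R where "R = c * gnorm2 (G1 + G2) y"
  have \<Psi>_expand: "\<Psi> (x + s *\<^sub>R y) = \<Psi> x + s * L + s\<^sup>2 * R" for s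
  proof -
    have "x + s *\<^sub>R y - a = (x - a) + s *\<^sub>R y" "x + s *\<^sub>R y - b = (x - b) + s *\<^sub>R y"
      by (simp_all add: algebra_simps)
    then show ?thesis
      unfolding \<Psi>_def L_def R_def
      by (simp only: gnorm2_add[OF G1] gnorm2_add[OF G2] gnorm2_scaleR gnorm2_matrix_add)
        (simp add: algebra_simps inner_add_right)
  qed
  have "0 \<le> \<theta> q - \<theta> x + L + s * R" if s: "0 < s" "s \<le> 1" for s
  proof -
    have "x + s *\<^sub>R y = (1 - s) *\<^sub>R x + s *\<^sub>R q"
      by (simp add: y_def algebra_simps)
    then have "\<theta> (x + s *\<^sub>R y) \<le> (1 - s) * \<theta> x + s * \<theta> q"
      using convex_onD[OF conv, of s x q] s by simp
    moreover have "\<theta> x + \<Psi> x \<le> \<theta> (x + s *\<^sub>R y) + \<Psi> (x + s *\<^sub>R y)"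
      using min[unfolded perturbed_argmin_def, THEN spec, of "x + s *\<^sub>R y"] unfolding \<Psi>_def by linarith
    moreover have "s * (\<theta> q - \<theta> x + L + s * R) = s * \<theta> q - s * \<theta> x + s * L + s\<^sup>2 * R"
      and "(1 - s) * \<theta> x = \<theta> x - s * \<theta> x"
      by (simp_all add: algebra_simps power2_eq_square)
    ultimately have "0 \<le> s * (\<theta> q - \<theta> x + L + s * R)"
      unfolding \<Psi>_expand by linarith
    then show ?thesis
      using s by (simp add: zero_le_mult_iff)
  qed
  then have "0 \<le> \<theta> q - \<theta> x + L"
    by (rule nonneg_if_nonneg_perturbations)
  moreover have "\<Psi> q = \<Psi> x + L + R"
    using \<Psi>_expand[of 1] by (simp add: y_def)
  ultimately show ?thesis
    unfolding \<Psi>_def R_def y_def by (simp add: algebra_simps)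
qed

section \<open>FISTA weights and perturbed recursions\<close>

definition fista_u :: "real \<Rightarrow> 'a::real_vector \<Rightarrow> 'a \<Rightarrow> 'a \<Rightarrow> 'a" where
  "fista_u \<tau> x' xs x = \<tau> *\<^sub>R x - ((\<tau> - 1) *\<^sub>R x' + xs)"

lemma inner_fista_u:
  fixes v x x1 x2 :: "'a::real_inner"
  shows "(\<tau> - 1) * (v \<bullet> (x1 - x)) + v \<bullet> (x2 - x) = - (v \<bullet> fista_u \<tau> x1 x2 x)"
  by (simp add: fista_u_def inner_diff_right inner_add_right algebra_simps)

lemma gnorm2_fista_u:
  fixes G :: "real^'n^'n"
  assumes G: "transpose G = G"
  shows "\<tau> * ((\<tau> - 1) * (gnorm2 G (w1 - x) - gnorm2 G (w1 - y)) + (gnorm2 G (w2 - x) - gnorm2 G (w2 - y)))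
    = gnorm2 G (fista_u \<tau> w1 w2 x) - gnorm2 G (fista_u \<tau> w1 w2 y)"
proof -
  define w where "w = (\<tau> - 1) *\<^sub>R w1 + w2"
  have sym: "u \<bullet> (G *v v) = v \<bullet> (G *v u)" for u v
    by (metis G symmetric_matrix_inner inner_commute)
  have u: "gnorm2 G (fista_u \<tau> w1 w2 z)
      = \<tau>\<^sup>2 * gnorm2 G z - 2 * \<tau> * ((\<tau> - 1) * (w1 \<bullet> (G *v z)) + w2 \<bullet> (G *v z)) + gnorm2 G w" for z
    unfolding fista_u_def w_def[symmetric] gnorm2_diff[OF G] gnorm2_scaleR
    by (simp add: w_def matrix_vector_mult_scaleR inner_add_left algebra_simps)
  have d: "gnorm2 G (v - z) = gnorm2 G v - 2 * (v \<bullet> (G *v z)) + gnorm2 G z" for v z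
    unfolding gnorm2_diff[OF G] using sym by simp
  show ?thesis
    unfolding u d by (simp add: algebra_simps power2_eq_square)
qed

lemma fista_weight_increment:
  fixes \<tau> :: real
  assumes "0 \<le> \<tau>"
  shows "\<tau> + 1 / 2 \<le> (1 + sqrt (1 + 4 * \<tau>\<^sup>2)) / 2" and "(1 + sqrt (1 + 4 * \<tau>\<^sup>2)) / 2 \<le> \<tau> + 1"
proof -
  have "2 * \<tau> \<le> sqrt (1 + 4 * \<tau>\<^sup>2)"
    by (rule real_le_rsqrt) (simp add: power2_eq_square)
  then show "\<tau> + 1 / 2 \<le> (1 + sqrt (1 + 4 * \<tau>\<^sup>2)) / 2"
    by simp
  have "sqrt (1 + 4 * \<tau>\<^sup>2) \<le> 1 + 2 * \<tau>"
    using assms by (intro real_le_lsqrt) (auto simp: power2_eq_square algebra_simps)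
  then show "(1 + sqrt (1 + 4 * \<tau>\<^sup>2)) / 2 \<le> \<tau> + 1"
    by simp
qed

lemma fista_weight_identity:
  fixes \<tau> :: real
  shows "((1 + sqrt (1 + 4 * \<tau>\<^sup>2)) / 2)\<^sup>2 - (1 + sqrt (1 + 4 * \<tau>\<^sup>2)) / 2 = \<tau>\<^sup>2"
proof -
  have "(sqrt (1 + 4 * \<tau>\<^sup>2))\<^sup>2 = 1 + 4 * \<tau>\<^sup>2"
    by simp
  then show ?thesis
    by (simp add: power2_eq_square field_simps)
qed

lemma fista_weights_bounds:
  fixes t :: "nat \<Rightarrow> real"
  assumes "t 1 = 1" and "\<And>k. 1 \<le> k \<Longrightarrow> t (Suc k) = (1 + sqrt (1 + 4 * (t k)\<^sup>2)) / 2"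
    and "1 \<le> k"
  shows "(real k + 1) / 2 \<le> t k \<and> t k \<le> real k"
  using \<open>1 \<le> k\<close>
proof (induction k rule: dec_induct)
  case (step k)
  then show ?case
    using assms(2)[of k] fista_weight_increment[of "t k"] by auto
qed (use assms(1) in simp)

lemma telescope_le:
  fixes E g :: "nat \<Rightarrow> real"
  assumes "\<And>k. 1 \<le> k \<Longrightarrow> E k \<le> E (k - 1) + g k"
  shows "E N \<le> E 0 + (\<Sum>k=1..N. g k)"
proof (induction N)
  case (Suc N)
  then show ?case
    using assms[of "Suc N"] by (simp add: sum.cl_ivl_Suc)
qed simp
lemma sqrt_perturbed_recursion_at_max:
  fixes E c d :: "nat \<Rightarrow> real"
  assumes E: "\<And>k. 0 \<le> E k" and c: "\<And>k. 0 \<le> c k" and d: "\<And>k. 0 \<le> d k"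
    and "summable c" and "summable d"
    and rec: "\<And>k. 1 \<le> k \<Longrightarrow> E k \<le> E (k - 1) + c k * (sqrt (E (k - 1)) + sqrt (E k)) + d k"
    and max: "\<And>i. i \<le> j \<Longrightarrow> E i \<le> E j"
  shows "E j \<le> 2 * (E 0 + suminf d) + 4 * (suminf c)\<^sup>2"
proof -
  define x where "x = sqrt (E j)"
  have sqrt_le: "sqrt (E i) \<le> x" if "i \<le> j" for i
    unfolding x_def using max[OF that] by (simp add: real_sqrt_le_mono)
  have "E j \<le> E 0 + (\<Sum>k=1..j. c k * (sqrt (E (k - 1)) + sqrt (E k)) + d k)"
    by (rule telescope_le) (metis rec add.assoc)
  also have "\<dots> \<le> E 0 + (\<Sum>k=1..j. 2 * x * c k + d k)"
  proof (intro add_left_mono sum_mono add_right_mono)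
    fix k assume "k \<in> {1..j}"
    then have "k - 1 \<le> j" "k \<le> j"
      by auto
    then have "sqrt (E (k - 1)) + sqrt (E k) \<le> 2 * x"
      using sqrt_le[of "k - 1"] sqrt_le[of k] by linarith
    then show "c k * (sqrt (E (k - 1)) + sqrt (E k)) \<le> 2 * x * c k"
      using c[of k] by (simp add: mult_left_mono mult.commute)
  qed
  also have "\<dots> = E 0 + 2 * x * (\<Sum>k=1..j. c k) + (\<Sum>k=1..j. d k)"
    by (simp add: sum.distrib sum_distrib_left)
  also have "\<dots> \<le> E 0 + 2 * x * suminf c + suminf d"
  proof -
    have "(\<Sum>k=1..j. c k) \<le> suminf c" "(\<Sum>k=1..j. d k) \<le> suminf d"
      using assms(4,5) c d by (auto intro: sum_le_suminf)
    moreover have "0 \<le> x"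
      unfolding x_def using E[of j] by simp
    ultimately show ?thesis
      by (simp add: add_mono mult_left_mono)
  qed
  finally have "E j \<le> E 0 + 2 * x * suminf c + suminf d" .
  moreover have "0 \<le> (x - 2 * suminf c)\<^sup>2"
    by simp
  moreover have "x\<^sup>2 = E j"
    unfolding x_def using E[of j] by simp
  ultimately show ?thesis
    by (simp add: power2_eq_square algebra_simps)
qed

lemma bounded_if_sqrt_perturbed_recursion:
  fixes E c d :: "nat \<Rightarrow> real"
  assumes "\<And>k. 0 \<le> E k" and "\<And>k. 0 \<le> c k" and "\<And>k. 0 \<le> d k"
    and "summable c" and "summable d"
    and "\<And>k. 1 \<le> k \<Longrightarrow> E k \<le> E (k - 1) + c k * (sqrt (E (k - 1)) + sqrt (E k)) + d k"
  shows "\<exists>B. \<forall>k. E k \<le> B"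
proof -
  have "E N \<le> 2 * (E 0 + suminf d) + 4 * (suminf c)\<^sup>2" for N
  proof -
    have "Max (E ` {..N}) \<in> E ` {..N}"
      by (intro Max_in) auto
    then obtain j where j: "j \<le> N" and "E j = Max (E ` {..N})"
      by (metis atMost_iff imageE)
    then have max: "E i \<le> E j" if "i \<le> N" for i
      using that by simp
    then have "E j \<le> 2 * (E 0 + suminf d) + 4 * (suminf c)\<^sup>2"
      using j by (intro sqrt_perturbed_recursion_at_max[OF assms]) auto
    then show ?thesis
      using max[of N] by simp
  qed
  then show ?thesis
    by blast
qed

lemma summable_power2_if_nonneg:
  fixes e :: "nat \<Rightarrow> real"
  assumes e: "\<And>n. 0 \<le> e n" and "summable e"
  shows "summable (\<lambda>n. (e n)\<^sup>2)"
proof (rule summable_comparison_test_ev[OF _ \<open>summable e\<close>])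
  have "eventually (\<lambda>n. e n < 1) sequentially"
    using summable_LIMSEQ_zero[OF \<open>summable e\<close>] by (rule order_tendstoD) simp
  then show "eventually (\<lambda>n. norm ((e n)\<^sup>2) \<le> e n) sequentially"
  proof eventually_elim
    case (elim n)
    then show ?case
      using e[of n] by (simp add: power2_eq_square mult_left_le)
  qed
qed

section \<open>The dual problem\<close>

(* Sl and Sm are the proximal terms sigma I - M^-1 and c_n W^-1 - M^-1 of the lambda- and
   mu-steps; only their positive semidefiniteness is used.  Pl = M^-1 + Sl and Pm = M^-1 + Sm
   are the corresponding blocks of D_2 + Q_22. *)
locale dual_problem =
  fixes K M D Sl Sm :: "real^'n^'n" and yd f :: "real^'n" and \<alpha> delta a b :: real
  assumes K_symmetric: "transpose K = K" and M_spd: "spd M" and D_spd: "spd D"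
    and Sl_psd: "psd Sl" and Sm_psd: "psd Sm"
    and alpha_pos: "0 < \<alpha>" and delta_pos: "0 < delta" and a_le_b: "a \<le> b"
begin

definition "Minv = matrix_inv M"
definition "\<gamma> = 1 / (2 * \<alpha>)"
definition "Pl = Minv + Sl"
definition "Pm = Minv + Sm"

definition "F p l m = F_fun K M D yd f \<alpha> delta a b p l m"
definition "smooth p l m = (M *v f) \<bullet> p + phi_fun K M yd \<alpha> p l m"

definition "grad_p p l m = M *v f + K *v (Minv *v (K *v p + l - M *v yd)) + (2 * \<gamma>) *\<^sub>R (M *v p - m)"
definition "hess_p = K ** Minv ** K + (2 * \<gamma>) *\<^sub>R M"
definition "p_offset d u v = matrix_inv hess_p *v (K *v (Minv *v u) - (2 * \<gamma>) *\<^sub>R v - d)"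

definition "l_objective p lk = (\<lambda>q.
  support_fun (C_set D delta) q + 1/2 * gnorm2 Minv (q - M *v yd + K *v p) + 1/2 * gnorm2 Sl (q - lk))"
definition "m_objective p mk = (\<lambda>q.
  support_fun (S_box a b) q + \<gamma> * gnorm2 Minv (q - M *v p) + \<gamma> * gnorm2 Sm (q - mk))"

lemma gamma_pos: "0 < \<gamma>"
  unfolding \<gamma>_def using alpha_pos by simp

lemma M_symmetric: "transpose M = M"
  using M_spd unfolding spd_def by simp

lemma M_invertible: "invertible M"
  using M_spd unfolding spd_def by (intro invertible_if_positive_definite) auto

lemma M_Minv: "M *v (Minv *v v) = v"
  unfolding Minv_def using matrix_inv_inverse(1)[OF M_invertible] by (simp add: matrix_vector_mul_assoc)

lemma Minv_symmetric: "transpose Minv = Minv"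
  unfolding Minv_def using symmetric_matrix_inv[OF M_invertible M_symmetric] .

lemma gnorm2_Minv: "gnorm2 Minv v = gnorm2 M (Minv *v v)"
proof -
  have "gnorm2 Minv v = (M *v (Minv *v v)) \<bullet> (Minv *v v)"
    unfolding gnorm2_def M_Minv by (simp add: inner_commute)
  then show ?thesis
    unfolding gnorm2_def by (simp add: symmetric_matrix_inner[OF M_symmetric])
qed

lemma gnorm2_Minv_nonneg: "0 \<le> gnorm2 Minv v"
  unfolding gnorm2_Minv using M_spd unfolding spd_def gnorm2_def
  by (cases "Minv *v v = 0") (auto simp: less_imp_le)

lemma Minv_spd: "spd Minv"
  unfolding spd_def
proof (intro conjI allI impI Minv_symmetric)
  fix x :: "real^'n" assume "x \<noteq> 0"
  then have "Minv *v x \<noteq> 0"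
    using M_Minv[of x] by auto
  then show "0 < x \<bullet> (Minv *v x)"
    using gnorm2_Minv[of x] M_spd unfolding spd_def gnorm2_def by auto
qed

lemma Sl_symmetric: "transpose Sl = Sl" and Sm_symmetric: "transpose Sm = Sm"
  using Sl_psd Sm_psd unfolding psd_def by simp_all

lemma gnorm2_Sl_nonneg: "0 \<le> gnorm2 Sl v" and gnorm2_Sm_nonneg: "0 \<le> gnorm2 Sm v"
  using Sl_psd Sm_psd unfolding psd_def gnorm2_def by simp_all

lemma Pl_symmetric: "transpose Pl = Pl" and Pm_symmetric: "transpose Pm = Pm"
  unfolding Pl_def Pm_def using Minv_symmetric Sl_symmetric Sm_symmetric
  by (simp_all add: transpose_def vec_eq_iff)

lemma prox_norm_coercive:
  "\<exists>\<kappa>>0. \<forall>u v. \<kappa> * (norm u)\<^sup>2 \<le> 1/2 * gnorm2 Pl u + \<gamma> * gnorm2 Pm v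
                 \<and> \<kappa> * (norm v)\<^sup>2 \<le> 1/2 * gnorm2 Pl u + \<gamma> * gnorm2 Pm v"
proof -
  obtain c where c: "0 < c" "\<And>x. c * (norm x)\<^sup>2 \<le> gnorm2 Minv x"
    using spd_coercive[OF Minv_spd] by blast
  define \<kappa> where "\<kappa> = min (c / 2) (\<gamma> * c)"
  have \<kappa>: "0 < \<kappa>" "\<kappa> \<le> c / 2" "\<kappa> \<le> \<gamma> * c"
    unfolding \<kappa>_def using c(1) gamma_pos by auto
  have l: "\<kappa> * (norm u)\<^sup>2 \<le> 1/2 * gnorm2 Pl u" for u
  proof -
    have "\<kappa> * (norm u)\<^sup>2 \<le> 1/2 * (c * (norm u)\<^sup>2)"
      using mult_right_mono[OF \<kappa>(2), of "(norm u)\<^sup>2"] by simp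
    also have "\<dots> \<le> 1/2 * gnorm2 Pl u"
      using c(2)[of u] gnorm2_Sl_nonneg[of u] unfolding Pl_def gnorm2_matrix_add
      by (intro mult_left_mono) auto
    finally show ?thesis .
  qed
  have m: "\<kappa> * (norm v)\<^sup>2 \<le> \<gamma> * gnorm2 Pm v" for v
  proof -
    have "\<kappa> * (norm v)\<^sup>2 \<le> \<gamma> * (c * (norm v)\<^sup>2)"
      using mult_right_mono[OF \<kappa>(3), of "(norm v)\<^sup>2"] by (simp add: mult.assoc)
    also have "\<dots> \<le> \<gamma> * gnorm2 Pm v"
      using c(2)[of v] gnorm2_Sm_nonneg[of v] gamma_pos unfolding Pm_def gnorm2_matrix_add
      by (intro mult_left_mono) auto
    finally show ?thesis .
  qed
  have "0 \<le> \<kappa> * (norm w)\<^sup>2" for w :: "real^'n"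
    using \<kappa>(1) by simp
  then show ?thesis
    using \<kappa>(1) l m by (smt (verit))
qed

lemma F_eq: "F p l m = smooth p l m + support_fun (C_set D delta) l + support_fun (S_box a b) m"
  unfolding F_def F_fun_def smooth_def phi_fun_def by simp

lemma smooth_eq:
  "smooth p l m = (M *v f) \<bullet> p + 1/2 * gnorm2 Minv (K *v p + l - M *v yd)
     + \<gamma> * gnorm2 Minv (M *v p - m) - 1/2 * gnorm2 M yd"
  unfolding smooth_def phi_fun_def K_symmetric Minv_def \<gamma>_def by simp

lemma smooth_expand:
  "smooth (p + x) (l + u) (m + v) = smooth p l m + x \<bullet> grad_p p l m
     + u \<bullet> (Minv *v (K *v p + l - M *v yd)) - 2 * \<gamma> * (v \<bullet> (Minv *v (M *v p - m)))
     + 1/2 * gnorm2 Minv (K *v x + u) + \<gamma> * gnorm2 Minv (M *v x - v)"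
proof -
  define r where "r = K *v p + l - M *v yd"
  define s where "s = M *v p - m"
  have r': "K *v (p + x) + (l + u) - M *v yd = r + (K *v x + u)"
    unfolding r_def by (simp add: matrix_vector_right_distrib algebra_simps)
  have s': "M *v (p + x) - (m + v) = s + (M *v x - v)"
    unfolding s_def by (simp add: matrix_vector_right_distrib algebra_simps)
  have "(K *v x) \<bullet> (Minv *v r) = x \<bullet> (K *v (Minv *v r))"
    by (rule symmetric_matrix_inner[OF K_symmetric])
  then have r_expand: "gnorm2 Minv (r + (K *v x + u))
      = gnorm2 Minv r + 2 * (x \<bullet> (K *v (Minv *v r)) + u \<bullet> (Minv *v r)) + gnorm2 Minv (K *v x + u)"
    using gnorm2_add[OF Minv_symmetric, of r "K *v x + u"] by (simp add: inner_add_left)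
  have "(M *v x) \<bullet> (Minv *v s) = x \<bullet> s"
    using symmetric_matrix_inner[OF M_symmetric, of x "Minv *v s"] M_Minv by simp
  then have s_expand: "gnorm2 Minv (s + (M *v x - v))
      = gnorm2 Minv s + 2 * (x \<bullet> s - v \<bullet> (Minv *v s)) + gnorm2 Minv (M *v x - v)"
    using gnorm2_add[OF Minv_symmetric, of s "M *v x - v"] by (simp add: inner_diff_left)
  have grad: "x \<bullet> grad_p p l m = (M *v f) \<bullet> x + x \<bullet> (K *v (Minv *v r)) + 2 * \<gamma> * (x \<bullet> s)"
    unfolding grad_p_def r_def[symmetric] s_def[symmetric] by (simp add: inner_add_right inner_commute)
  have p: "smooth p l m = (M *v f) \<bullet> p + 1/2 * gnorm2 Minv r + \<gamma> * gnorm2 Minv s - 1/2 * gnorm2 M yd"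
    unfolding smooth_eq r_def s_def ..
  have px: "smooth (p + x) (l + u) (m + v) = (M *v f) \<bullet> p + (M *v f) \<bullet> x + 1/2 * gnorm2 Minv (r + (K *v x + u))
      + \<gamma> * gnorm2 Minv (s + (M *v x - v)) - 1/2 * gnorm2 M yd"
    unfolding smooth_eq r' s' by (simp add: inner_add_right)
  show ?thesis
    unfolding r_def[symmetric] s_def[symmetric] px p r_expand s_expand grad by (simp add: algebra_simps)
qed

lemma smooth_expand_p:
  "smooth (p + x) l m = smooth p l m + x \<bullet> grad_p p l m + 1/2 * gnorm2 Minv (K *v x) + \<gamma> * gnorm2 Minv (M *v x)"
  using smooth_expand[of p x l 0 m 0] by simp

lemma grad_p_if_perturbed_argmin:
  assumes "perturbed_argmin (\<lambda>q. smooth q l m) d p"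
  shows "grad_p p l m = d"
proof -
  have "x \<bullet> grad_p p l m - d \<bullet> x = 0" for x
  proof (rule linear_coeff_zero_if_nonneg_quadratic)
    fix s :: real
    have "smooth p l m - d \<bullet> p \<le> smooth (p + s *\<^sub>R x) l m - d \<bullet> (p + s *\<^sub>R x)"
      using assms unfolding perturbed_argmin_def by blast
    then show "0 \<le> s * (x \<bullet> grad_p p l m - d \<bullet> x)
        + s\<^sup>2 * (1/2 * gnorm2 Minv (K *v x) + \<gamma> * gnorm2 Minv (M *v x))"
      unfolding smooth_expand_p
      by (simp add: matrix_vector_mult_scaleR gnorm2_scaleR inner_add_right algebra_simps)
  qed
  from this[of "grad_p p l m - d"] have "(grad_p p l m - d) \<bullet> (grad_p p l m - d) = 0"
    by (simp add: inner_diff_left inner_commute)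
  then show ?thesis
    by simp
qed

lemma smooth_le_if_grad_p_zero:
  assumes "grad_p p l m = 0"
  shows "smooth p l m \<le> smooth q l m"
  using smooth_expand_p[of p "q - p" l m] assms gnorm2_Minv_nonneg gamma_pos
  by (simp add: add_nonneg_nonneg)

lemma smooth_change_lm:
  assumes "grad_p p lk mk = d"
  shows "smooth p l m \<le> smooth q l m - d \<bullet> (q - p) + 1/2 * gnorm2 Minv (l - lk) + \<gamma> * gnorm2 Minv (m - mk)"
proof -
  have q: "smooth q l m = smooth p lk mk + (q - p) \<bullet> d
      + (l - lk) \<bullet> (Minv *v (K *v p + lk - M *v yd)) - 2 * \<gamma> * ((m - mk) \<bullet> (Minv *v (M *v p - mk)))
      + 1/2 * gnorm2 Minv (K *v (q - p) + (l - lk)) + \<gamma> * gnorm2 Minv (M *v (q - p) - (m - mk))"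
    using smooth_expand[of p "q - p" lk "l - lk" mk "m - mk"] assms by simp
  have p: "smooth p l m = smooth p lk mk
      + (l - lk) \<bullet> (Minv *v (K *v p + lk - M *v yd)) - 2 * \<gamma> * ((m - mk) \<bullet> (Minv *v (M *v p - mk)))
      + 1/2 * gnorm2 Minv (l - lk) + \<gamma> * gnorm2 Minv (m - mk)"
    using smooth_expand[of p 0 lk "l - lk" mk "m - mk"] gnorm2_uminus[of Minv "m - mk"] by simp
  have "0 \<le> 1/2 * gnorm2 Minv (K *v (q - p) + (l - lk)) + \<gamma> * gnorm2 Minv (M *v (q - p) - (m - mk))"
    using gnorm2_Minv_nonneg gamma_pos by (simp add: add_nonneg_nonneg)
  then show ?thesis
    using p q by (simp add: inner_commute)
qed

lemma hess_p_apply: "hess_p *v y = K *v (Minv *v (K *v y)) + (2 * \<gamma>) *\<^sub>R (M *v y)"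
  unfolding hess_p_def
  by (simp add: matrix_vector_mult_add_rdistrib matrix_vector_mul_assoc matrix_mul_assoc
      scaleR_matrix_vector_assoc)

lemma hess_p_invertible: "invertible hess_p"
proof (rule invertible_if_positive_definite)
  fix y :: "real^'n" assume "y \<noteq> 0"
  then have "0 < gnorm2 M y"
    using M_spd unfolding spd_def gnorm2_def by blast
  moreover have "y \<bullet> (hess_p *v y) = gnorm2 Minv (K *v y) + 2 * \<gamma> * gnorm2 M y"
    unfolding hess_p_apply gnorm2_def by (simp add: inner_add_right symmetric_matrix_inner[OF K_symmetric, symmetric])
  ultimately show "0 < y \<bullet> (hess_p *v y)"
    using gnorm2_Minv_nonneg[of "K *v y"] gamma_pos by (smt (verit) mult_pos_pos)
qed

lemma grad_p_shift:
  assumes "grad_p p lk mk = d"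
  shows "grad_p (p + p_offset d (lk - l) (mk - m)) l m = 0"
proof -
  have solve: "hess_p *v (matrix_inv hess_p *v g) = g" for g
    using matrix_inv_inverse(1)[OF hess_p_invertible] by (simp add: matrix_vector_mul_assoc)
  have shift: "grad_p (p + y) l m = d + hess_p *v y + K *v (Minv *v (l - lk)) - (2 * \<gamma>) *\<^sub>R (m - mk)" for y
    unfolding assms[symmetric] grad_p_def hess_p_apply
    by (simp add: matrix_vector_right_distrib matrix_vector_mult_diff_distrib algebra_simps)
  show ?thesis
    unfolding shift p_offset_def solve
    by (simp add: matrix_vector_mult_diff_distrib algebra_simps)
qed

lemma p_offset_combination:
  "c *\<^sub>R p_offset d u v + p_offset d' u' v' = p_offset (c *\<^sub>R d + d') (c *\<^sub>R u + u') (c *\<^sub>R v + v')"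
  unfolding p_offset_def
  by (simp add: matrix_vector_mult_scaleR matrix_vector_right_distrib algebra_simps)

lemma p_offset_fista_combination:
  "(\<tau> - 1) * (d \<bullet> p_offset d (lk - l1) (mk - m1)) + d \<bullet> p_offset d (lk - l2) (mk - m2)
     = d \<bullet> p_offset (\<tau> *\<^sub>R d) (fista_u \<tau> l1 l2 lk) (fista_u \<tau> m1 m2 mk)"
proof -
  have "(\<tau> - 1) *\<^sub>R d + d = \<tau> *\<^sub>R d"
    by (simp add: algebra_simps)
  moreover have "(\<tau> - 1) *\<^sub>R (x - x1) + (x - x2) = fista_u \<tau> x1 x2 x" for x x1 x2 :: "real^'n"
    by (simp add: fista_u_def algebra_simps)
  ultimately have "(\<tau> - 1) *\<^sub>R p_offset d (lk - l1) (mk - m1) + p_offset d (lk - l2) (mk - m2)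
      = p_offset (\<tau> *\<^sub>R d) (fista_u \<tau> l1 l2 lk) (fista_u \<tau> m1 m2 mk)"
    unfolding p_offset_combination by simp
  then show ?thesis
    by (metis inner_add_right inner_scaleR_right)
qed

lemma p_offset_bounded: "\<exists>C>0. \<forall>d u v. norm (p_offset d u v) \<le> C * (norm d + norm u + norm v)"
proof -
  obtain C1 where C1: "C1 > 0" "\<forall>x. norm (matrix_inv hess_p *v x) \<le> C1 * norm x"
    using matrix_vector_mult_bounded by blast
  obtain C2 where C2: "C2 > 0" "\<forall>x. norm ((K ** Minv) *v x) \<le> C2 * norm x"
    using matrix_vector_mult_bounded by blast
  have "norm (p_offset d u v) \<le> C1 * (C2 + 2 * \<gamma> + 1) * (norm d + norm u + norm v)" for d u v
  proof -
    have "norm (K *v (Minv *v u) - (2 * \<gamma>) *\<^sub>R v - d) \<le> C2 * norm u + 2 * \<gamma> * norm v + norm d"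
      using C2(2)[rule_format, of u] gamma_pos norm_triangle_ineq4[of "K *v (Minv *v u) - (2 * \<gamma>) *\<^sub>R v" d]
        norm_triangle_ineq4[of "K *v (Minv *v u)" "(2 * \<gamma>) *\<^sub>R v"]
      by (simp add: matrix_vector_mul_assoc)
    also have "\<dots> \<le> (C2 + 2 * \<gamma> + 1) * (norm d + norm u + norm v)"
      using C2(1) gamma_pos by (simp add: algebra_simps)
    finally show ?thesis
      unfolding p_offset_def using C1 by (smt (verit) mult.assoc mult_left_mono)
  qed
  moreover have "0 < C1 * (C2 + 2 * \<gamma> + 1)"
    using C1(1) C2(1) gamma_pos by simp
  ultimately show ?thesis
    by blast
qed

lemma support_C_convex: "convex_on UNIV (support_fun (C_set D delta))"
  using support_fun_convex C_set_nonempty[OF delta_pos] C_set_bounded[OF D_spd] by blast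

lemma support_S_convex: "convex_on UNIV (support_fun (S_box a b))"
  using support_fun_convex S_box_nonempty[OF a_le_b] S_box_bounded by blast

lemma inexact_step_descent:
  assumes p: "grad_p pt lk mk = dp"
    and l: "perturbed_argmin (l_objective pt lk) dl lt"
    and m: "perturbed_argmin (m_objective pt mk) dm mt"
  shows "F pt lt mt \<le> F q l m + 1/2 * gnorm2 Pl (l - lk) - 1/2 * gnorm2 Pl (l - lt)
           + \<gamma> * gnorm2 Pm (m - mk) - \<gamma> * gnorm2 Pm (m - mt)
           - dp \<bullet> (q - pt) - dl \<bullet> (l - lt) - dm \<bullet> (m - mt)"
proof -
  define c where "c = M *v yd - K *v pt"
  have "perturbed_argmin (\<lambda>q. support_fun (C_set D delta) q + 1/2 * gnorm2 Minv (q - c) + 1/2 * gnorm2 Sl (q - lk)) dl lt"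
    using l unfolding perturbed_argmin_def l_objective_def c_def by (simp add: algebra_simps)
  from prox_three_point[OF support_C_convex Minv_symmetric Sl_symmetric this, of l]
  have L: "support_fun (C_set D delta) lt + 1/2 * gnorm2 Minv (lt - c) + 1/2 * gnorm2 Sl (lt - lk) - dl \<bullet> lt
        + 1/2 * gnorm2 Pl (l - lt)
      \<le> support_fun (C_set D delta) l + 1/2 * gnorm2 Minv (l - c) + 1/2 * gnorm2 Sl (l - lk) - dl \<bullet> l"
    unfolding Pl_def .
  have "perturbed_argmin (\<lambda>q. support_fun (S_box a b) q + \<gamma> * gnorm2 Minv (q - M *v pt) + \<gamma> * gnorm2 Sm (q - mk)) dm mt"
    using m unfolding perturbed_argmin_def m_objective_def .
  from prox_three_point[OF support_S_convex Minv_symmetric Sm_symmetric this, of m]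
  have Mm: "support_fun (S_box a b) mt + \<gamma> * gnorm2 Minv (mt - M *v pt) + \<gamma> * gnorm2 Sm (mt - mk) - dm \<bullet> mt
        + \<gamma> * gnorm2 Pm (m - mt)
      \<le> support_fun (S_box a b) m + \<gamma> * gnorm2 Minv (m - M *v pt) + \<gamma> * gnorm2 Sm (m - mk) - dm \<bullet> m"
    unfolding Pm_def .
  have smooth_pt: "smooth pt l' m' = (M *v f) \<bullet> pt + 1/2 * gnorm2 Minv (l' - c)
      + \<gamma> * gnorm2 Minv (m' - M *v pt) - 1/2 * gnorm2 M yd" for l' m'
  proof -
    have l': "K *v pt + l' - M *v yd = l' - c"
      unfolding c_def by (simp add: algebra_simps)
    have m': "gnorm2 Minv (M *v pt - m') = gnorm2 Minv (m' - M *v pt)"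
      using gnorm2_uminus[of Minv "m' - M *v pt"] by simp
    show ?thesis
      unfolding smooth_eq l' m' ..
  qed
  have "0 \<le> 1/2 * gnorm2 Sl (lt - lk)" "0 \<le> \<gamma> * gnorm2 Sm (mt - mk)"
    using gnorm2_Sl_nonneg gnorm2_Sm_nonneg gamma_pos by simp_all
  then show ?thesis
    using L Mm smooth_change_lm[OF p, of l m q] smooth_pt[of lt mt] smooth_pt[of l m]
    unfolding F_eq Pl_def Pm_def gnorm2_matrix_add by (simp add: inner_diff_right algebra_simps)
qed

(* Comparing with the exact minimizer of smooth (-) l m, an explicit offset from pt, instead of
   with an arbitrary q is what lets the p-block go without a proximal term. *)
lemma inexact_step_descent_offset:
  assumes p: "grad_p pt lk mk = dp"
    and l: "perturbed_argmin (l_objective pt lk) dl lt"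
    and m: "perturbed_argmin (m_objective pt mk) dm mt"
  shows "F pt lt mt \<le> F q l m + 1/2 * gnorm2 Pl (l - lk) - 1/2 * gnorm2 Pl (l - lt)
           + \<gamma> * gnorm2 Pm (m - mk) - \<gamma> * gnorm2 Pm (m - mt)
           - dp \<bullet> p_offset dp (lk - l) (mk - m) - dl \<bullet> (l - lt) - dm \<bullet> (m - mt)"
proof -
  define y where "y = p_offset dp (lk - l) (mk - m)"
  have "smooth (pt + y) l m \<le> smooth q l m"
    unfolding y_def by (rule smooth_le_if_grad_p_zero[OF grad_p_shift[OF p]])
  then have "F (pt + y) l m \<le> F q l m"
    unfolding F_eq by simp
  with inexact_step_descent[OF p l m, of "pt + y" l m] show ?thesis
    unfolding y_def by simp
qed

lemma inexact_step_combination: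
  assumes p: "grad_p pt lk mk = dp"
    and l: "perturbed_argmin (l_objective pt lk) dl lt"
    and m: "perturbed_argmin (m_objective pt mk) dm mt"
    and \<tau>: "1 \<le> \<tau>"
  shows "\<tau>\<^sup>2 * F pt lt mt \<le> \<tau> * (\<tau> - 1) * F p1 l1 m1 + \<tau> * F p2 l2 m2
     + 1/2 * gnorm2 Pl (fista_u \<tau> l1 l2 lk) - 1/2 * gnorm2 Pl (fista_u \<tau> l1 l2 lt)
     + \<gamma> * gnorm2 Pm (fista_u \<tau> m1 m2 mk) - \<gamma> * gnorm2 Pm (fista_u \<tau> m1 m2 mt)
     + \<tau> * (dl \<bullet> fista_u \<tau> l1 l2 lt + dm \<bullet> fista_u \<tau> m1 m2 mt
            - dp \<bullet> p_offset (\<tau> *\<^sub>R dp) (fista_u \<tau> l1 l2 lk) (fista_u \<tau> m1 m2 mk))"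
proof -
  define R where "R q l m = F q l m + 1/2 * gnorm2 Pl (l - lk) - 1/2 * gnorm2 Pl (l - lt)
    + \<gamma> * gnorm2 Pm (m - mk) - \<gamma> * gnorm2 Pm (m - mt)
    - dp \<bullet> p_offset dp (lk - l) (mk - m) - dl \<bullet> (l - lt) - dm \<bullet> (m - mt)" for q l m
  have "F pt lt mt \<le> R q l m" for q l m
    unfolding R_def by (rule inexact_step_descent_offset[OF p l m])
  then have "\<tau> * (\<tau> - 1) * F pt lt mt + \<tau> * F pt lt mt \<le> \<tau> * (\<tau> - 1) * R p1 l1 m1 + \<tau> * R p2 l2 m2"
    using \<tau> by (intro add_mono mult_left_mono) auto
  also have "\<dots> = \<tau> * (\<tau> - 1) * F p1 l1 m1 + \<tau> * F p2 l2 m2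
     + 1/2 * (\<tau> * ((\<tau> - 1) * (gnorm2 Pl (l1 - lk) - gnorm2 Pl (l1 - lt)) + (gnorm2 Pl (l2 - lk) - gnorm2 Pl (l2 - lt))))
     + \<gamma> * (\<tau> * ((\<tau> - 1) * (gnorm2 Pm (m1 - mk) - gnorm2 Pm (m1 - mt)) + (gnorm2 Pm (m2 - mk) - gnorm2 Pm (m2 - mt))))
     - \<tau> * ((\<tau> - 1) * (dl \<bullet> (l1 - lt)) + dl \<bullet> (l2 - lt))
     - \<tau> * ((\<tau> - 1) * (dm \<bullet> (m1 - mt)) + dm \<bullet> (m2 - mt))
     - \<tau> * ((\<tau> - 1) * (dp \<bullet> p_offset dp (lk - l1) (mk - m1)) + dp \<bullet> p_offset dp (lk - l2) (mk - m2))"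
    unfolding R_def by (simp add: field_simps)
  also have "\<dots> = \<tau> * (\<tau> - 1) * F p1 l1 m1 + \<tau> * F p2 l2 m2
     + 1/2 * gnorm2 Pl (fista_u \<tau> l1 l2 lk) - 1/2 * gnorm2 Pl (fista_u \<tau> l1 l2 lt)
     + \<gamma> * gnorm2 Pm (fista_u \<tau> m1 m2 mk) - \<gamma> * gnorm2 Pm (fista_u \<tau> m1 m2 mt)
     + \<tau> * (dl \<bullet> fista_u \<tau> l1 l2 lt + dm \<bullet> fista_u \<tau> m1 m2 mt
            - dp \<bullet> p_offset (\<tau> *\<^sub>R dp) (fista_u \<tau> l1 l2 lk) (fista_u \<tau> m1 m2 mk))"
    unfolding gnorm2_fista_u[OF Pl_symmetric] gnorm2_fista_u[OF Pm_symmetric]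
      p_offset_fista_combination inner_fista_u
    by (simp add: algebra_simps)
  finally show ?thesis
    by (simp add: power2_eq_square algebra_simps)
qed

end

section \<open>The inexact accelerated block coordinate descent\<close>

locale inexact_abcd = dual_problem K M D Sl Sm yd f \<alpha> delta a b
  for K M D Sl Sm :: "real^'n^'n" and yd f :: "real^'n" and \<alpha> delta a b :: real +
  fixes \<epsilon> t :: "nat \<Rightarrow> real"
    and l m pt lt mt dp dl dm :: "nat \<Rightarrow> real^'n"
    and ps ls ms :: "real^'n"
  assumes eps_nonneg: "\<And>k. 0 \<le> \<epsilon> k"
    and eps_summable: "summable (\<lambda>k. real k * \<epsilon> k)"
    and init: "l 1 = lt 0" "m 1 = mt 0"
    and t_1: "t 1 = 1"
    and t_Suc: "\<And>k. 1 \<le> k \<Longrightarrow> t (Suc k) = (1 + sqrt (1 + 4 * (t k)\<^sup>2)) / 2"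
    and err: "\<And>k. 1 \<le> k \<Longrightarrow> norm (dp k) \<le> \<epsilon> k \<and> norm (dl k) \<le> \<epsilon> k \<and> norm (dm k) \<le> \<epsilon> k"
    and step_p: "\<And>k. 1 \<le> k \<Longrightarrow>
      perturbed_argmin (\<lambda>q. (M *v f) \<bullet> q + phi_fun K M yd \<alpha> q (l k) (m k)) (dp k) (pt k)"
    and step_l: "\<And>k. 1 \<le> k \<Longrightarrow>
      perturbed_argmin (\<lambda>q. support_fun (C_set D delta) q
          + 1/2 * gnorm2 (matrix_inv M) (q - M *v yd + transpose K *v pt k)
          + 1/2 * gnorm2 Sl (q - l k)) (dl k) (lt k)"
    and step_m: "\<And>k. 1 \<le> k \<Longrightarrow>
      perturbed_argmin (\<lambda>q. support_fun (S_box a b) q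
          + 1/(2*\<alpha>) * gnorm2 (matrix_inv M) (q - M *v pt k)
          + 1/(2*\<alpha>) * gnorm2 Sm (q - m k)) (dm k) (mt k)"
    and extrap: "\<And>k. 1 \<le> k \<Longrightarrow>
      l (Suc k) = lt k + ((t k - 1) / t (Suc k)) *\<^sub>R (lt k - lt (k - 1)) \<and>
      m (Suc k) = mt k + ((t k - 1) / t (Suc k)) *\<^sub>R (mt k - mt (k - 1))"
    and minimizer: "\<And>q r s. F_fun K M D yd f \<alpha> delta a b ps ls ms \<le> F_fun K M D yd f \<alpha> delta a b q r s"
begin

(* The weight 1 at k = 0 gives u_l 0 = lt 0 - ls, so that u_l_extrapolation holds also for
   k = 1, where l 1 = lt 0. *)
definition "u_l k = fista_u (if k = 0 then 1 else t k) (lt (k - 1)) ls (lt k)"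
definition "u_m k = fista_u (if k = 0 then 1 else t k) (mt (k - 1)) ms (mt k)"
definition "prox_dist k = 1/2 * gnorm2 Pl (u_l k) + \<gamma> * gnorm2 Pm (u_m k)"
definition "gap k = F (pt k) (lt k) (mt k) - F ps ls ms"
definition "energy k = (if k = 0 then 0 else (t k)\<^sup>2 * gap k) + prox_dist k"
definition "error_term k = t k * (dl k \<bullet> u_l k + dm k \<bullet> u_m k
   - dp k \<bullet> p_offset (t k *\<^sub>R dp k) (u_l (k - 1)) (u_m (k - 1)))"

lemma t_bounds: "1 \<le> k \<Longrightarrow> (real k + 1) / 2 \<le> t k \<and> t k \<le> real k"
  using fista_weights_bounds[OF t_1 t_Suc] .

lemma t_ge_1: "1 \<le> k \<Longrightarrow> 1 \<le> t k"
  using t_bounds[of k] by auto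

lemma t_Suc_weight:
  assumes "1 \<le> k"
  shows "t (Suc k) * (t (Suc k) - 1) = (t k)\<^sup>2"
proof -
  have "(t (Suc k))\<^sup>2 - t (Suc k) = (t k)\<^sup>2"
    unfolding t_Suc[OF assms] by (rule fista_weight_identity)
  then show ?thesis
    by (simp add: power2_eq_square algebra_simps)
qed

lemma u_l_pos: "1 \<le> k \<Longrightarrow> u_l k = fista_u (t k) (lt (k - 1)) ls (lt k)"
  and u_m_pos: "1 \<le> k \<Longrightarrow> u_m k = fista_u (t k) (mt (k - 1)) ms (mt k)"
  unfolding u_l_def u_m_def by simp_all

lemma fista_u_extrapolation:
  fixes x xt :: "nat \<Rightarrow> real^'n"
  assumes x1: "x 1 = xt 0"
    and x_Suc: "\<And>k. 1 \<le> k \<Longrightarrow> x (Suc k) = xt k + ((t k - 1) / t (Suc k)) *\<^sub>R (xt k - xt (k - 1))"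
    and k: "1 \<le> k"
  shows "fista_u (t k) (xt (k - 1)) xs (x k)
       = fista_u (if k - 1 = 0 then 1 else t (k - 1)) (xt (k - 1 - 1)) xs (xt (k - 1))"
proof (cases "k = 1")
  case True
  then show ?thesis
    using x1 t_1 by (simp add: fista_u_def)
next
  case False
  then obtain j where j: "k = Suc j" "1 \<le> j"
    using k by (cases k) auto
  have "t (Suc j) \<noteq> 0"
    using t_ge_1[of "Suc j"] by simp
  then have "t (Suc j) *\<^sub>R x (Suc j) = t (Suc j) *\<^sub>R xt j + (t j - 1) *\<^sub>R (xt j - xt (j - 1))"
    unfolding x_Suc[OF j(2)] by (simp add: scaleR_add_right)
  then show ?thesis
    using j by (simp add: fista_u_def algebra_simps)
qed

lemma u_l_extrapolation: "1 \<le> k \<Longrightarrow> fista_u (t k) (lt (k - 1)) ls (l k) = u_l (k - 1)"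
  unfolding u_l_def by (rule fista_u_extrapolation[of l lt, OF init(1)]) (use extrap in auto)

lemma u_m_extrapolation: "1 \<le> k \<Longrightarrow> fista_u (t k) (mt (k - 1)) ms (m k) = u_m (k - 1)"
  unfolding u_m_def by (rule fista_u_extrapolation[of m mt, OF init(2)]) (use extrap in auto)

lemma gap_nonneg: "0 \<le> gap k"
  unfolding gap_def F_def using minimizer by simp

lemma prox_dist_nonneg: "0 \<le> prox_dist k"
proof -
  obtain \<kappa> where "0 < \<kappa>" "\<And>u v. \<kappa> * (norm u)\<^sup>2 \<le> 1/2 * gnorm2 Pl u + \<gamma> * gnorm2 Pm v"
    using prox_norm_coercive by blast
  then show ?thesis
    unfolding prox_dist_def by (meson order_trans zero_le_mult_iff zero_le_power2 less_imp_le)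
qed

lemma energy_nonneg: "0 \<le> energy k"
  unfolding energy_def using gap_nonneg prox_dist_nonneg by simp

lemma u_bounded_by_energy:
  "\<exists>\<rho>>0. \<forall>k. norm (u_l k) \<le> \<rho> * sqrt (energy k) \<and> norm (u_m k) \<le> \<rho> * sqrt (energy k)"
proof -
  obtain \<kappa> where \<kappa>: "0 < \<kappa>"
    and coercive: "\<And>u v. \<kappa> * (norm u)\<^sup>2 \<le> 1/2 * gnorm2 Pl u + \<gamma> * gnorm2 Pm v
                       \<and> \<kappa> * (norm v)\<^sup>2 \<le> 1/2 * gnorm2 Pl u + \<gamma> * gnorm2 Pm v"
    using prox_norm_coercive by blast
  have bound: "norm w \<le> 1 / sqrt \<kappa> * sqrt (energy k)" if "\<kappa> * (norm w)\<^sup>2 \<le> prox_dist k" for w k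
  proof -
    have "prox_dist k \<le> energy k"
      unfolding energy_def using gap_nonneg by simp
    then have "(norm w)\<^sup>2 \<le> energy k / \<kappa>"
      using that \<kappa> by (simp add: field_simps)
    then have "norm w \<le> sqrt (energy k / \<kappa>)"
      by (rule real_le_rsqrt)
    then show ?thesis
      by (simp add: real_sqrt_divide)
  qed
  show ?thesis
    using \<kappa> bound coercive unfolding prox_dist_def by (intro exI[of _ "1 / sqrt \<kappa>"]) auto
qed

lemma energy_step:
  assumes k: "1 \<le> k"
  shows "energy k \<le> energy (k - 1) + error_term k"
proof -
  have "grad_p (pt k) (l k) (m k) = dp k"
    using step_p[OF k] unfolding smooth_def[symmetric] by (rule grad_p_if_perturbed_argmin)
  moreover have "perturbed_argmin (l_objective (pt k) (l k)) (dl k) (lt k)"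
    using step_l[OF k] unfolding l_objective_def Minv_def K_symmetric .
  moreover have "perturbed_argmin (m_objective (pt k) (m k)) (dm k) (mt k)"
    using step_m[OF k] unfolding m_objective_def Minv_def \<gamma>_def .
  ultimately have "(t k)\<^sup>2 * F (pt k) (lt k) (mt k)
      \<le> t k * (t k - 1) * F (pt (k - 1)) (lt (k - 1)) (mt (k - 1)) + t k * F ps ls ms
         + prox_dist (k - 1) - prox_dist k + error_term k"
    using inexact_step_combination[OF _ _ _ t_ge_1[OF k], of "pt k" "l k" "m k" "dp k" "dl k" "lt k" "dm k" "mt k"
        "pt (k - 1)" "lt (k - 1)" "mt (k - 1)" ps ls ms]
    unfolding u_l_extrapolation[OF k] u_m_extrapolation[OF k] u_l_pos[OF k, symmetric] u_m_pos[OF k, symmetric]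
      prox_dist_def error_term_def
    by (simp add: algebra_simps)
  then have step: "(t k)\<^sup>2 * gap k \<le> t k * (t k - 1) * gap (k - 1) + prox_dist (k - 1) - prox_dist k + error_term k"
    unfolding gap_def by (simp add: power2_eq_square algebra_simps)
  show ?thesis
  proof (cases "k = 1")
    case True
    then show ?thesis
      using step t_1 unfolding energy_def by simp
  next
    case False
    then have "t k * (t k - 1) = (t (k - 1))\<^sup>2"
      using t_Suc_weight[of "k - 1"] k by simp
    then show ?thesis
      using step k False unfolding energy_def by simp
  qed
qed

lemma error_term_le:
  assumes k: "1 \<le> k"
  shows "error_term k \<le> t k * \<epsilon> k
    * (norm (u_l k) + norm (u_m k) + norm (p_offset (t k *\<^sub>R dp k) (u_l (k - 1)) (u_m (k - 1))))"
proof -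
  define P where "P = p_offset (t k *\<^sub>R dp k) (u_l (k - 1)) (u_m (k - 1))"
  have ip: "v \<bullet> w \<le> \<epsilon> k * norm w" if "norm v \<le> \<epsilon> k" for v w :: "real^'n"
    using norm_cauchy_schwarz[of v w] mult_right_mono[OF that norm_ge_zero[of w]] by linarith
  have "dl k \<bullet> u_l k \<le> \<epsilon> k * norm (u_l k)" "dm k \<bullet> u_m k \<le> \<epsilon> k * norm (u_m k)"
    "(- dp k) \<bullet> P \<le> \<epsilon> k * norm P"
    using ip[of "dl k"] ip[of "dm k"] ip[of "- dp k" P] err[OF k] by auto
  then have "dl k \<bullet> u_l k + dm k \<bullet> u_m k - dp k \<bullet> P \<le> \<epsilon> k * (norm (u_l k) + norm (u_m k) + norm P)"
    unfolding distrib_left inner_minus_left by linarith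
  then show ?thesis
    unfolding error_term_def P_def[symmetric] using t_ge_1[OF k] by (simp add: mult.assoc mult_left_mono)
qed

lemma error_term_le_energy:
  assumes k: "1 \<le> k"
    and Cp: "0 < Cp" "\<And>d u v. norm (p_offset d u v) \<le> Cp * (norm d + norm u + norm v)"
    and \<rho>: "\<And>k. norm (u_l k) \<le> \<rho> * sqrt (energy k) \<and> norm (u_m k) \<le> \<rho> * sqrt (energy k)"
  shows "error_term k \<le> t k * \<epsilon> k * (2 * \<rho> * sqrt (energy k)
           + Cp * (t k * \<epsilon> k + 2 * \<rho> * sqrt (energy (k - 1))))"
proof -
  have "norm (t k *\<^sub>R dp k) \<le> t k * \<epsilon> k"
    using err[OF k] t_ge_1[OF k] by (simp add: mult_left_mono)
  then have "norm (t k *\<^sub>R dp k) + norm (u_l (k - 1)) + norm (u_m (k - 1))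
      \<le> t k * \<epsilon> k + 2 * \<rho> * sqrt (energy (k - 1))"
    using \<rho>[of "k - 1"] by linarith
  then have "norm (p_offset (t k *\<^sub>R dp k) (u_l (k - 1)) (u_m (k - 1)))
      \<le> Cp * (t k * \<epsilon> k + 2 * \<rho> * sqrt (energy (k - 1)))"
    using Cp by (meson order_trans mult_left_mono less_imp_le)
  then have "norm (u_l k) + norm (u_m k) + norm (p_offset (t k *\<^sub>R dp k) (u_l (k - 1)) (u_m (k - 1)))
      \<le> 2 * \<rho> * sqrt (energy k) + Cp * (t k * \<epsilon> k + 2 * \<rho> * sqrt (energy (k - 1)))"
    using \<rho>[of k] by linarith
  moreover have "0 \<le> t k * \<epsilon> k"
    using t_ge_1[OF k] eps_nonneg[of k] by simp
  ultimately show ?thesis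
    using error_term_le[OF k] mult_left_mono by (meson order_trans)
qed

lemma error_term_bound:
  "\<exists>C\<ge>0. \<forall>k\<ge>1. error_term k
     \<le> C * (real k * \<epsilon> k) * (sqrt (energy (k - 1)) + sqrt (energy k)) + C * (real k * \<epsilon> k)\<^sup>2"
proof -
  obtain Cp where Cp: "0 < Cp" "\<And>d u v. norm (p_offset d u v) \<le> Cp * (norm d + norm u + norm v)"
    using p_offset_bounded by blast
  obtain \<rho> where \<rho>: "0 < \<rho>" "\<And>k. norm (u_l k) \<le> \<rho> * sqrt (energy k) \<and> norm (u_m k) \<le> \<rho> * sqrt (energy k)"
    using u_bounded_by_energy by blast
  define C where "C = Cp + 2 * \<rho> * (Cp + 1)"
  have C: "0 \<le> C" "Cp \<le> C" "2 * \<rho> \<le> C" "2 * Cp * \<rho> \<le> C"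
    unfolding C_def using Cp(1) \<rho>(1) by (simp_all add: algebra_simps)
  have "error_term k \<le> C * (real k * \<epsilon> k) * (sqrt (energy (k - 1)) + sqrt (energy k)) + C * (real k * \<epsilon> k)\<^sup>2"
    if k: "1 \<le> k" for k
  proof -
    define e where "e = t k * \<epsilon> k"
    define s0 where "s0 = sqrt (energy (k - 1))"
    define s1 where "s1 = sqrt (energy k)"
    have e: "0 \<le> e" "e \<le> real k * \<epsilon> k"
      unfolding e_def using t_bounds[OF k] t_ge_1[OF k] eps_nonneg[of k] by (auto intro: mult_right_mono)
    have s: "0 \<le> s0" "0 \<le> s1"
      unfolding s0_def s1_def using energy_nonneg by simp_all
    have "error_term k \<le> e * (2 * \<rho> * s1 + Cp * (e + 2 * \<rho> * s0))"
      unfolding e_def s0_def s1_def by (rule error_term_le_energy[OF k Cp \<rho>(2)])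
    also have "\<dots> = 2 * \<rho> * (e * s1) + 2 * Cp * \<rho> * (e * s0) + Cp * (e * e)"
      by (simp add: algebra_simps)
    also have "\<dots> \<le> C * (e * s1) + C * (e * s0) + C * (e * e)"
      using C e(1) s by (intro add_mono mult_right_mono) auto
    also have "\<dots> = C * (e * (s0 + s1)) + C * (e * e)"
      by (simp add: algebra_simps)
    also have "\<dots> \<le> C * (real k * \<epsilon> k * (s0 + s1)) + C * (real k * \<epsilon> k)\<^sup>2"
      using C(1) e s by (intro add_mono mult_left_mono) (auto simp: power2_eq_square intro: mult_right_mono mult_mono)
    finally show ?thesis
      unfolding s0_def s1_def by (simp add: mult.assoc)
  qed
  then show ?thesis
    using C(1) by blast
qed

lemma energy_bounded: "\<exists>B. \<forall>k. energy k \<le> B"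
proof -
  obtain C where C: "0 \<le> C" and bound: "\<And>k. 1 \<le> k \<Longrightarrow> error_term k
     \<le> C * (real k * \<epsilon> k) * (sqrt (energy (k - 1)) + sqrt (energy k)) + C * (real k * \<epsilon> k)\<^sup>2"
    using error_term_bound by blast
  have rec: "energy k \<le> energy (k - 1) + C * (real k * \<epsilon> k) * (sqrt (energy (k - 1)) + sqrt (energy k))
      + C * (real k * \<epsilon> k)\<^sup>2" if "1 \<le> k" for k
    using energy_step[OF that] bound[OF that] by linarith
  have "0 \<le> real k * \<epsilon> k" for k
    using eps_nonneg by simp
  then show ?thesis
    using energy_nonneg C
    by (intro bounded_if_sqrt_perturbed_recursion[where E = energy, OF _ _ _ _ _ rec])
      (auto intro!: summable_mult eps_summable summable_power2_if_nonneg)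
qed

lemma convergence_rate: "\<exists>B. \<forall>k\<ge>1. gap k \<le> 4 * B / (real k + 1)\<^sup>2"
proof -
  obtain B where B: "\<And>k. energy k \<le> B"
    using energy_bounded by blast
  have "gap k \<le> 4 * B / (real k + 1)\<^sup>2" if k: "1 \<le> k" for k
  proof -
    have "((real k + 1) / 2)\<^sup>2 * gap k \<le> (t k)\<^sup>2 * gap k"
      using t_bounds[OF k] gap_nonneg by (intro mult_right_mono power_mono) auto
    also have "\<dots> \<le> B"
      using B[of k] prox_dist_nonneg[of k] k unfolding energy_def by simp
    finally have "gap k * (real k + 1)\<^sup>2 \<le> 4 * B"
      by (simp add: power_divide field_simps)
    then show ?thesis
      by (simp add: pos_le_divide_eq)
  qed
  then show ?thesis
    by blast
qed

end

theorem theorem7: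
  fixes K M W D :: "real^'n^'n"
    and yd f :: "real^'n"
    and \<alpha> delta a b cn \<sigma> :: real
    and \<epsilon> t :: "nat \<Rightarrow> real"
    and p l m pt lt mt dp dl dm :: "nat \<Rightarrow> real^'n"
    and ps ls ms :: "real^'n"
  assumes K_spd: "spd K"
    and M_spd: "spd M"
    and D_spd: "spd D"
    and W_diag: "is_diag W" and W_pos: "\<forall>i. 0 < W $ i $ i"
    and cn: "cn = 4 \<or> cn = 5"
    and norm_equiv: "\<forall>z. gnorm2 M z \<le> gnorm2 W z \<and> gnorm2 W z \<le> cn * gnorm2 M z"
    and sigma_def: "\<sigma> = cn * (1 / Min (range (\<lambda>i. W $ i $ i)))"
    and psd1: "psd (\<sigma> *\<^sub>R mat 1 - matrix_inv M)"
    and psd2: "psd (cn *\<^sub>R matrix_inv W - matrix_inv M)"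
    and alpha_pos: "\<alpha> > 0" and delta_pos: "delta > 0" and ab: "a \<le> b"
    and eps_nonneg: "\<forall>k. 0 \<le> \<epsilon> k"
    and eps_sum: "summable (\<lambda>k. real k * \<epsilon> k)"
    and init: "p 1 = pt 0" "l 1 = lt 0" "m 1 = mt 0"
    and t1: "t 1 = 1"
    and t_rec: "\<forall>k\<ge>1. t (Suc k) = (1 + sqrt (1 + 4 * (t k)\<^sup>2)) / 2"
    and err: "\<forall>k\<ge>1. norm (dp k) \<le> \<epsilon> k \<and> norm (dl k) \<le> \<epsilon> k \<and> norm (dm k) \<le> \<epsilon> k"
    and step_p: "\<forall>k\<ge>1. \<forall>q.
        (M *v f) \<bullet> pt k + phi_fun K M yd \<alpha> (pt k) (l k) (m k) - dp k \<bullet> pt k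
        \<le> (M *v f) \<bullet> q + phi_fun K M yd \<alpha> q (l k) (m k) - dp k \<bullet> q"
    and step_l: "\<forall>k\<ge>1. \<forall>q.
        support_fun (C_set D delta) (lt k)
          + 1/2 * gnorm2 (matrix_inv M) (lt k - M *v yd + transpose K *v pt k)
          + 1/2 * gnorm2 (\<sigma> *\<^sub>R mat 1 - matrix_inv M) (lt k - l k) - dl k \<bullet> lt k
        \<le> support_fun (C_set D delta) q
          + 1/2 * gnorm2 (matrix_inv M) (q - M *v yd + transpose K *v pt k)
          + 1/2 * gnorm2 (\<sigma> *\<^sub>R mat 1 - matrix_inv M) (q - l k) - dl k \<bullet> q"
    and step_m: "\<forall>k\<ge>1. \<forall>q.
        support_fun (S_box a b) (mt k)
          + 1/(2*\<alpha>) * gnorm2 (matrix_inv M) (mt k - M *v pt k)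
          + 1/(2*\<alpha>) * gnorm2 (cn *\<^sub>R matrix_inv W - matrix_inv M) (mt k - m k) - dm k \<bullet> mt k
        \<le> support_fun (S_box a b) q
          + 1/(2*\<alpha>) * gnorm2 (matrix_inv M) (q - M *v pt k)
          + 1/(2*\<alpha>) * gnorm2 (cn *\<^sub>R matrix_inv W - matrix_inv M) (q - m k) - dm k \<bullet> q"
    and extrap: "\<forall>k\<ge>1.
        p (Suc k) = pt k + ((t k - 1) / t (Suc k)) *\<^sub>R (pt k - pt (k - 1)) \<and>
        l (Suc k) = lt k + ((t k - 1) / t (Suc k)) *\<^sub>R (lt k - lt (k - 1)) \<and>
        m (Suc k) = mt k + ((t k - 1) / t (Suc k)) *\<^sub>R (mt k - mt (k - 1))"
    and zstar: "\<forall>q r s. F_fun K M D yd f \<alpha> delta a b ps ls ms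
                        \<le> F_fun K M D yd f \<alpha> delta a b q r s"
  shows "\<exists>c0. \<forall>k\<ge>1.
     F_fun K M D yd f \<alpha> delta a b (pt k) (lt k) (mt k) - F_fun K M D yd f \<alpha> delta a b ps ls ms
     \<le> (2 * (gnorm2 (0::real^'n^'n) (pt 0 - ps)
              + gnorm2 ((\<sigma> *\<^sub>R mat 1 - matrix_inv M) + matrix_inv M) (lt 0 - ls)
              + gnorm2 ((1/\<alpha>) *\<^sub>R (cn *\<^sub>R matrix_inv W - matrix_inv M) + (1/\<alpha>) *\<^sub>R matrix_inv M) (mt 0 - ms))
         + c0) / (real k + 1)\<^sup>2"
proof -
  interpret inexact_abcd K M D "\<sigma> *\<^sub>R mat 1 - matrix_inv M" "cn *\<^sub>R matrix_inv W - matrix_inv M"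
    yd f \<alpha> delta a b \<epsilon> t l m pt lt mt dp dl dm ps ls ms
    by unfold_locales (use assms in \<open>auto simp: spd_def perturbed_argmin_def\<close>)
  obtain B where "\<forall>k\<ge>1. gap k \<le> 4 * B / (real k + 1)\<^sup>2"
    using convergence_rate by blast
  then have "\<forall>k\<ge>1. gap k \<le> (X + (4 * B - X)) / (real k + 1)\<^sup>2" for X
    by simp
  then show ?thesis
    unfolding gap_def F_def by blast
qed

end
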